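(* Let $\epsilon\in(0,1/4)$. There is $n_0(\epsilon)$ such that the following holds for $n\ge n_0$. Let $G$ be a graph on $n$ vertices with minimum degree $\delta$, where $\delta\ge(\ln n)^{2/\epsilon}(\ln\ln n)^{1/\epsilon}$, and assume $s^*=\delta^{1/2+\epsilon}$ and $k=\delta^{1/2-\epsilon}/\ln\ln n$ are integers. With the random partition $V(G)=B\cup S$, $S=S_1\cup\dots\cup S_k$ described in the context, with probability at least $1-1/n^2$ we have $|L(v)|\le\frac{42\,n\deg(v)\ln n}{k\,\delta^{1+\epsilon}}$ for every $v\in S$.
   Context: Graphs are finite and simple; $\deg(v)$ is the degree of $v$ in $G$; $\ln$ is the natural logarithm. Random partition: let $X_v$, $v\in V(G)$, be i.i.d. uniform on $[0,1]$. For each integer $1\le i\le\delta-s^*$, put $v$ in $B_i$ if $X_v\in[\frac{i-1}{\delta},\frac{i}{\delta})$. For $1\le j\le k-1$, put $v$ in $S_j$ if $X_v\in\left[\frac{\delta-s^*}{\delta}+\frac{(j-1)s^*}{\delta k},\frac{\delta-s^*}{\delta}+\frac{js^*}{\delta k}\right)$, and put $v$ in $S_k$ if $X_v\in\left[\frac{\delta-s^*}{\delta}+\frac{(k-1)s^*}{\delta k},1\right]$. Let $B=\bigcup_iB_i$, $S=\bigcup_jS_j$. For $v\in S_i$ define the interval $I_{v,i}=\left[\deg(v)\left(1-\frac{4s^*i}{\delta}-\frac{34\ln n}{\delta^{\epsilon}}\right),\ \deg(v)\left(1-\frac{4s^*i}{\delta}+\frac{3s^*}{\delta}\right)\right]$.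 For $v\in S_i$, $L(v)$ is the set of vertices $u\in S$, $u\ne v$, such that $u\in S_j$ with $I_{v,i}\cap I_{u,j}\neq\emptyset$. *)

theory Defs
  imports "HOL-Probability.Probability"
begin

text \<open>Simple graph: finite vertex set V (of naturals) and a symmetric irreflexive
  adjacency relation E; the degree of v counts neighbours in V.\<close>

definition deg :: "nat set \<Rightarrow> (nat \<Rightarrow> nat \<Rightarrow> bool) \<Rightarrow> nat \<Rightarrow> nat" where
  "deg V E v = card {u \<in> V. E v u}"

definition mindeg :: "nat set \<Rightarrow> (nat \<Rightarrow> nat \<Rightarrow> bool) \<Rightarrow> nat" where
  "mindeg V E = Min (deg V E ` V)"

text \<open>The part S_j (1 \<le> j \<le> k) of the random partition, for delta = minimum degree,
  s = s^*, and sample X (X v = X_v).\<close>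

definition Spart :: "nat set \<Rightarrow> (nat \<Rightarrow> nat \<Rightarrow> bool) \<Rightarrow> nat \<Rightarrow> nat \<Rightarrow> (nat \<Rightarrow> real) \<Rightarrow> nat \<Rightarrow> nat set" where
  "Spart V E s k X j =
    (let d = real (mindeg V E); a = (d - real s) / d in
     {v \<in> V. 1 \<le> j \<and> j \<le> k \<and>
        a + (real j - 1) * real s / (d * real k) \<le> X v \<and>
        (if j < k then X v < a + real j * real s / (d * real k) else X v \<le> 1)})"

definition Sset :: "nat set \<Rightarrow> (nat \<Rightarrow> nat \<Rightarrow> bool) \<Rightarrow> nat \<Rightarrow> nat \<Rightarrow> (nat \<Rightarrow> real) \<Rightarrow> nat set" where
  "Sset V E s k X = (\<Union>j\<in>{1..k}. Spart V E s k X j)"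

definition Ival :: "nat set \<Rightarrow> (nat \<Rightarrow> nat \<Rightarrow> bool) \<Rightarrow> real \<Rightarrow> nat \<Rightarrow> nat \<Rightarrow> nat \<Rightarrow> real set" where
  "Ival V E \<epsilon> s v i =
    (let d = real (mindeg V E); n = real (card V); dv = real (deg V E v) in
     {dv * (1 - 4 * real s * real i / d - 34 * ln n / d powr \<epsilon>) ..
      dv * (1 - 4 * real s * real i / d + 3 * real s / d)})"

definition Lset :: "nat set \<Rightarrow> (nat \<Rightarrow> nat \<Rightarrow> bool) \<Rightarrow> real \<Rightarrow> nat \<Rightarrow> nat \<Rightarrow> (nat \<Rightarrow> real) \<Rightarrow> nat \<Rightarrow> nat set" where
  "Lset V E \<epsilon> s k X v =
    {u \<in> Sset V E s k X. u \<noteq> v \<and>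
       (\<exists>i j. v \<in> Spart V E s k X i \<and> u \<in> Spart V E s k X j \<and>
              Ival V E \<epsilon> s v i \<inter> Ival V E \<epsilon> s u j \<noteq> {})}"

definition labels :: "nat set \<Rightarrow> (nat \<Rightarrow> real) measure" where
  "labels V = PiM V (\<lambda>_. uniform_measure lborel {0..1::real})"

end

theory Submission
  imports Defs
begin

text \<open>
  Fix \<open>v\<close> and the part \<open>S\<^sub>i\<close> containing it. When \<open>j\<close> grows by one, \<open>I\<^sub>u\<^sub>,\<^sub>j\<close> moves down by
  \<open>4 s\<^sup>* deg(u) / \<delta>\<close>, while its length is only \<open>(3 s\<^sup>* / \<delta> + 34 ln n / \<delta>\<^sup>\<epsilon>) deg(u)\<close>; so at most
  \<open>4 + 34 \<delta>\<^sup>1\<^sup>-\<^sup>\<epsilon> ln n / s\<^sup>*\<close> parts \<open>S\<^sub>j\<close> can put a vertex \<open>u\<close> into \<open>L(v)\<close>. Each part receives \<open>u\<close>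
  with probability \<open>s\<^sup>* / (\<delta> k)\<close>, so \<open>|L(v)|\<close> is dominated by a sum of \<open>n - 1\<close> independent
  indicators, not involving the label of \<open>v\<close>, with mean at most \<open>38 n ln n / (k \<delta>\<^sup>\<epsilon>)\<close>.
  Hoeffding's inequality bounds the probability of exceeding the mean by \<open>4 n ln n / (k \<delta>\<^sup>\<epsilon>)\<close>
  by \<open>n\<^sup>-\<^sup>4\<close>, and a union bound over the at most \<open>n k \<le> n\<^sup>2\<close> pairs \<open>(v, i)\<close> finishes the proof.
\<close>

section \<open>Independent uniform labels\<close>

abbreviation uniform01 :: "real measure" where
  "uniform01 \<equiv> uniform_measure lborel {0..1}"

lemma prob_space_uniform01: "prob_space uniform01"
  by (rule prob_space_uniform_measure) auto

lemma prob_space_labels: "prob_space (labels V)"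
  unfolding labels_def by (rule prob_space_PiM) (rule prob_space_uniform01)

lemma distr_label:
  assumes "v \<in> V"
  shows "distr (labels V) uniform01 (\<lambda>X. X v) = uniform01"
  unfolding labels_def using assms by (intro distr_PiM_component prob_space_uniform01)

lemma measurable_label [measurable]: "(\<lambda>X. X v) \<in> borel_measurable (labels V)"
proof (cases "v \<in> V")
  case True
  then have "(\<lambda>X. X v) \<in> measurable (labels V) uniform01"
    unfolding labels_def by (rule measurable_component_singleton)
  then show ?thesis
    by (simp cong: measurable_cong_sets)
next
  case False
  then have "(\<lambda>X. X v) \<in> borel_measurable (labels V) \<longleftrightarrow>
      (\<lambda>X. undefined :: real) \<in> borel_measurable (labels V)"
    by (intro measurable_cong) (auto simp: labels_def space_PiM PiE_def extensional_def)
  then show ?thesis by simp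
qed

lemma indep_vars_labels:
  assumes "V \<noteq> {}"
  shows "prob_space.indep_vars (labels V) (\<lambda>_. borel) (\<lambda>u X. X u) V"
proof -
  interpret prob_space "labels V" by (rule prob_space_labels)
  have "distr (labels V) (Pi\<^sub>M V (\<lambda>_. uniform01)) (\<lambda>X. \<lambda>u\<in>V. X u) = labels V"
  proof -
    have "distr (labels V) (Pi\<^sub>M V (\<lambda>_. uniform01)) (\<lambda>X. \<lambda>u\<in>V. X u) =
        distr (labels V) (labels V) (\<lambda>X. X)"
      by (rule distr_cong)
        (auto simp: labels_def space_PiM PiE_def extensional_def restrict_def fun_eq_iff)
    then show ?thesis by simp
  qed
  moreover have "Pi\<^sub>M V (\<lambda>u. distr (labels V) uniform01 (\<lambda>X. X u)) = labels V"
    using distr_label[of _ V] unfolding labels_def[of V] by (intro PiM_cong) auto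
  ultimately have "indep_vars (\<lambda>_. uniform01) (\<lambda>u X. X u) V"
    using assms by (subst indep_vars_iff_distr_eq_PiM')
      (auto simp: labels_def intro: measurable_component_singleton)
  then show ?thesis
    by (rule indep_vars_compose2[where Y = "\<lambda>_ x. x", simplified])
      (rule measurable_ident_sets, simp)
qed

lemma labels_indicator_sum_tail:
  assumes W: "finite W" "W \<noteq> {}" "W \<subseteq> V"
    and T: "\<And>u. u \<in> W \<Longrightarrow> T u \<in> sets borel" "\<And>u. u \<in> W \<Longrightarrow> measure uniform01 (T u) \<le> p"
    and t: "t \<ge> 0"
  shows "measure (labels V)
      {X \<in> space (labels V). real (card W) * p + t \<le> (\<Sum>u\<in>W. indicator (T u) (X u))}
    \<le> exp (- 2 * t\<^sup>2 / real (card W))"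
proof -
  interpret prob_space "labels V" by (rule prob_space_labels)
  define Y where "Y u X = (indicator (T u) (X u) :: real)" for u and X :: "nat \<Rightarrow> real"
  have Y_meas: "Y u \<in> borel_measurable (labels V)" if "u \<in> W" for u
    unfolding Y_def using T(1)[OF that] by measurable
  have expectation_Y: "expectation (Y u) = measure uniform01 (T u)" if "u \<in> W" for u
  proof -
    have "expectation (Y u) = integral\<^sup>L (distr (labels V) uniform01 (\<lambda>X. X u)) (indicator (T u))"
      unfolding Y_def using that W T
      by (subst integral_distr)
        (auto simp: labels_def intro!: measurable_component_singleton borel_measurable_indicator)
    also have "distr (labels V) uniform01 (\<lambda>X. X u) = uniform01"
      using that W(3) by (intro distr_label) auto
    finally show ?thesis by (simp del: measure_uniform_measure)
  qed
  have "indep_vars (\<lambda>_. borel) Y W"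
    unfolding Y_def using W T(1)
    by (intro indep_vars_compose2[OF indep_vars_subset[OF indep_vars_labels W(3)]]) auto
  then interpret Hoeffding_ineq "labels V" W Y "\<lambda>_. 0" "\<lambda>_. 1" "\<Sum>u\<in>W. expectation (Y u)"
    by unfold_locales (use W in \<open>auto simp: Y_def\<close>)
  have "(\<Sum>u\<in>W. expectation (Y u)) \<le> real (card W) * p"
    using sum_mono[of W "\<lambda>u. expectation (Y u)" "\<lambda>_. p"] expectation_Y T(2) by simp
  then have "{X \<in> space (labels V). real (card W) * p + t \<le> (\<Sum>u\<in>W. indicator (T u) (X u))}
      \<subseteq> {X \<in> space (labels V). (\<Sum>u\<in>W. expectation (Y u)) + t \<le> (\<Sum>u\<in>W. Y u X)}"
    unfolding Y_def by auto
  moreover have "{X \<in> space (labels V). (\<Sum>u\<in>W. expectation (Y u)) + t \<le> (\<Sum>u\<in>W. Y u X)} \<in> events"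
    using Y_meas by measurable
  ultimately have "measure (labels V)
      {X \<in> space (labels V). real (card W) * p + t \<le> (\<Sum>u\<in>W. indicator (T u) (X u))}
    \<le> prob {X \<in> space (labels V). (\<Sum>u\<in>W. expectation (Y u)) + t \<le> (\<Sum>u\<in>W. Y u X)}"
    by (rule finite_measure_mono)
  also have "\<dots> \<le> exp (- 2 * t\<^sup>2 / (\<Sum>u\<in>W. (1 - 0)\<^sup>2))"
    using t W by (intro Hoeffding_ineq_ge) (simp_all add: card_gt_0_iff)
  finally show ?thesis by simp
qed

section \<open>The parts of the random partition\<close>

definition part_range :: "nat set \<Rightarrow> (nat \<Rightarrow> nat \<Rightarrow> bool) \<Rightarrow> nat \<Rightarrow> nat \<Rightarrow> nat \<Rightarrow> real set" where
  "part_range V E s k j =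
    (let d = real (mindeg V E); a = (d - real s) / d in
     {x. a + (real j - 1) * real s / (d * real k) \<le> x \<and>
        (if j < k then x < a + real j * real s / (d * real k) else x \<le> 1)})"

lemma Spart_iff:
  "v \<in> Spart V E s k X j \<longleftrightarrow> v \<in> V \<and> j \<in> {1..k} \<and> X v \<in> part_range V E s k j"
  unfolding Spart_def part_range_def Let_def by auto

lemma Spart_subset: "Spart V E s k X j \<subseteq> V"
  unfolding Spart_def Let_def by auto

lemma Sset_iff: "v \<in> Sset V E s k X \<longleftrightarrow> (\<exists>j\<in>{1..k}. v \<in> Spart V E s k X j)"
  unfolding Sset_def by auto

lemma ball_Sset_iff:
  "(\<forall>v \<in> Sset V E s k X. P v) \<longleftrightarrow> (\<forall>v \<in> V. \<forall>i \<in> {1..k}. v \<in> Spart V E s k X i \<longrightarrow> P v)"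
  unfolding Sset_def using Spart_subset by blast

lemma part_range_borel [measurable]: "part_range V E s k j \<in> sets borel"
  unfolding part_range_def Let_def by measurable

lemma Spart_unique:
  assumes "mindeg V E > 0" "s > 0" "k > 0"
    and "v \<in> Spart V E s k X i" "v \<in> Spart V E s k X i'"
  shows "i = i'"
proof (rule ccontr)
  define a where "a = (real (mindeg V E) - real s) / real (mindeg V E)"
  define w where "w = real s / (real (mindeg V E) * real k)"
  have "w > 0" using assms unfolding w_def by simp
  have bounds: "a + (real j - 1) * w \<le> X v \<and> (j < k \<longrightarrow> X v < a + real j * w) \<and> j \<le> k"
    if "v \<in> Spart V E s k X j" for j
    using that unfolding Spart_def Let_def a_def w_def by (auto simp: mult.assoc)
  have False if "j < j'" "v \<in> Spart V E s k X j" "v \<in> Spart V E s k X j'" for j j'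
  proof -
    have "real j * w \<le> (real j' - 1) * w"
      using that(1) \<open>w > 0\<close> by (intro mult_right_mono) auto
    then show False using bounds[OF that(2)] bounds[OF that(3)] that(1) by auto
  qed
  moreover assume "i \<noteq> i'"
  ultimately show False using assms(4,5) by (meson linorder_neqE_nat)
qed

lemma measure_part_range_le:
  assumes "mindeg V E > 0" "j \<in> {1..k}"
  shows "measure uniform01 (part_range V E s k j) \<le> real s / (real (mindeg V E) * real k)"
proof -
  interpret prob_space uniform01 by (rule prob_space_uniform01)
  define d where "d = real (mindeg V E)"
  define w where "w = real s / (d * real k)"
  define a where "a = (d - real s) / d + (real j - 1) * w"
  have "a + w = (d - real s) / d + real j * w"
    unfolding a_def by (simp add: algebra_simps)
  moreover have "j = k \<Longrightarrow> (d - real s) / d + real j * w = 1"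
    using assms unfolding d_def w_def by (simp add: field_simps)
  ultimately have "part_range V E s k j \<subseteq> {a .. a + w}"
    using assms unfolding part_range_def Let_def a_def w_def d_def by (auto simp: mult.assoc)
  then have "measure uniform01 (part_range V E s k j) \<le> measure uniform01 {a .. a + w}"
    by (intro finite_measure_mono) auto
  also have "\<dots> = measure lborel ({0..1} \<inter> {a .. a + w})"
    by simp
  also have "\<dots> \<le> measure lborel {a .. a + w}"
    using fmeasurable_cbox[of a "a + w"] by (intro measure_mono_fmeasurable) auto
  finally show ?thesis
    using assms unfolding w_def d_def by simp
qed

lemma Lset_iff:
  "u \<in> Lset V E \<epsilon> s k X v \<longleftrightarrow> u \<noteq> v \<and>
    (\<exists>i\<in>{1..k}. \<exists>j\<in>{1..k}. v \<in> Spart V E s k X i \<and> u \<in> Spart V E s k X j \<and>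
       Ival V E \<epsilon> s v i \<inter> Ival V E \<epsilon> s u j \<noteq> {})"
  unfolding Lset_def Sset_iff mem_Collect_eq by (metis Spart_iff)

lemma Lset_subset: "Lset V E \<epsilon> s k X v \<subseteq> V"
  by (auto simp: Lset_iff Spart_iff)

lemma pred_Spart [measurable]: "Measurable.pred (labels V) (\<lambda>X. v \<in> Spart V' E s k X j)"
  unfolding Spart_iff by measurable

lemma pred_Lset [measurable]: "Measurable.pred (labels V) (\<lambda>X. u \<in> Lset V' E \<epsilon> s k X v)"
  unfolding Lset_iff by measurable

lemma measurable_card_Lset [measurable]:
  assumes "finite V'"
  shows "(\<lambda>X. real (card (Lset V' E \<epsilon> s k X v))) \<in> borel_measurable (labels V)"
proof -
  have "real (card (Lset V' E \<epsilon> s k X v)) = (\<Sum>u\<in>V'. indicator (Lset V' E \<epsilon> s k X v) u)" for X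
    using assms Lset_subset[of V' E \<epsilon> s k X v]
    by (simp add: sum.If_cases indicator_def Int_absorb1)
  then show ?thesis using assms by simp
qed

section \<open>Few parts put a given vertex into \<open>L(v)\<close>\<close>

lemma card_meeting_shifted_intervals_le:
  fixes \<sigma> \<tau> D D' :: real and i k :: nat
  assumes \<sigma>: "\<sigma> > 0" and \<tau>: "\<tau> \<ge> 0" and D: "D \<ge> 0" and D': "D' > 0" and "i \<le> k"
    and small: "4 * \<sigma> * real k + \<tau> \<le> 1/2" "3 * \<sigma> \<le> 1/2"
  shows "real (card {j \<in> {1..k}.
      {D * (1 - 4 * \<sigma> * real i - \<tau>) .. D * (1 - 4 * \<sigma> * real i + 3 * \<sigma>)} \<inter>
      {D' * (1 - 4 * \<sigma> * real j - \<tau>) .. D' * (1 - 4 * \<sigma> * real j + 3 * \<sigma>)} \<noteq> {}})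
    \<le> 4 + \<tau> / \<sigma>" (is "real (card ?S) \<le> _")
proof (cases "?S = {}")
  case True
  show ?thesis unfolding True using \<sigma> \<tau> by simp
next
  case False
  have ends: "D' * (1 - 4 * \<sigma> * real j - \<tau>) \<le> D * (1 - 4 * \<sigma> * real i + 3 * \<sigma>) \<and>
      D * (1 - 4 * \<sigma> * real i - \<tau>) \<le> D' * (1 - 4 * \<sigma> * real j + 3 * \<sigma>)" if "j \<in> ?S" for j
    using that by auto
  define j0 where "j0 = Min ?S"
  have "finite ?S" by simp
  have j0_in: "j0 \<in> ?S"
    unfolding j0_def using \<open>finite ?S\<close> False by (rule Min_in)
  have j0_le: "j0 \<le> j" if "j \<in> ?S" for j
    unfolding j0_def using \<open>finite ?S\<close> that by (rule Min_le)
  have "4 * \<sigma> * real i \<le> 4 * \<sigma> * real k"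
    using \<sigma> \<open>i \<le> k\<close> by simp
  then have "D * (1/2) \<le> D * (1 - 4 * \<sigma> * real i - \<tau>)"
    using D small by (intro mult_left_mono) auto
  also have "\<dots> \<le> D' * (1 - 4 * \<sigma> * real j0 + 3 * \<sigma>)"
    using ends[OF j0_in] by simp
  also have "\<dots> \<le> D' * (3/2)"
  proof (rule mult_left_mono)
    have "0 \<le> 4 * \<sigma> * real j0" using \<sigma> by simp
    then show "1 - 4 * \<sigma> * real j0 + 3 * \<sigma> \<le> 3/2" using small by linarith
  qed (use D' in simp)
  finally have "D \<le> 3 * D'" by simp
  \<comment> \<open>Meeting intervals have left endpoints \<open>4 \<sigma> D'\<close> apart, all inside a window of
    length \<open>(3 \<sigma> + \<tau>) (D + D') \<le> 4 (3 \<sigma> + \<tau>) D'\<close>.\<close>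
  have spread: "real j \<le> real j0 + (3 + \<tau> / \<sigma>)" if "j \<in> ?S" for j
  proof -
    have "4 * \<sigma> * D' * (real j - real j0) \<le> (3 * \<sigma> + \<tau>) * (D + D')"
      using ends[OF j0_in] ends[OF that] by (simp add: algebra_simps)
    also have "\<dots> \<le> (3 * \<sigma> + \<tau>) * (4 * D')"
      using \<open>D \<le> 3 * D'\<close> \<sigma> \<tau> by (intro mult_left_mono) auto
    finally have "(4 * D') * (\<sigma> * (real j - real j0)) \<le> (4 * D') * (3 * \<sigma> + \<tau>)"
      by (simp add: algebra_simps)
    then have "\<sigma> * (real j - real j0) \<le> 3 * \<sigma> + \<tau>"
      using D' by simp
    then show ?thesis using \<sigma> by (simp add: field_simps)
  qed
  define L where "L = 3 + \<tau> / \<sigma>"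
  have "L \<ge> 0" unfolding L_def using \<sigma> \<tau> by simp
  have "?S \<subseteq> {j0 .. j0 + nat \<lfloor>L\<rfloor>}"
  proof
    fix j assume "j \<in> ?S"
    then have "real j \<le> real j0 + L"
      using spread unfolding L_def by blast
    then have "int j \<le> int j0 + \<lfloor>L\<rfloor>"
      by linarith
    then show "j \<in> {j0 .. j0 + nat \<lfloor>L\<rfloor>}"
      using j0_le[OF \<open>j \<in> ?S\<close>] \<open>L \<ge> 0\<close> by auto
  qed
  then have "card ?S \<le> nat \<lfloor>L\<rfloor> + 1"
    using card_mono[of "{j0 .. j0 + nat \<lfloor>L\<rfloor>}" ?S] by simp
  then show ?thesis
    using \<open>L \<ge> 0\<close> unfolding L_def by linarith
qed

lemma mindeg_le_deg: "finite V \<Longrightarrow> v \<in> V \<Longrightarrow> mindeg V E \<le> deg V E v"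
  unfolding mindeg_def by simp

lemma deg_le_card: "finite V \<Longrightarrow> deg V E v \<le> card V"
  unfolding deg_def by (intro card_mono) auto

definition meeting_parts :: "nat set \<Rightarrow> (nat \<Rightarrow> nat \<Rightarrow> bool) \<Rightarrow> real \<Rightarrow>
    nat \<Rightarrow> nat \<Rightarrow> nat \<Rightarrow> nat \<Rightarrow> nat \<Rightarrow> nat set" where
  "meeting_parts V E \<epsilon> s k v i u = {j \<in> {1..k}. Ival V E \<epsilon> s v i \<inter> Ival V E \<epsilon> s u j \<noteq> {}}"

lemma card_meeting_parts_le:
  fixes V :: "nat set" and E :: "nat \<Rightarrow> nat \<Rightarrow> bool"
  defines "d \<equiv> real (mindeg V E)" and "n \<equiv> real (card V)"
  assumes "finite V" "u \<in> V" "i \<le> k" "mindeg V E > 0" "s > 0"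
    and "4 * (real s / d) * real k + 34 * ln n / d powr \<epsilon> \<le> 1/2" "3 * (real s / d) \<le> 1/2"
  shows "real (card (meeting_parts V E \<epsilon> s k v i u))
    \<le> 4 + 34 * ln n / d powr \<epsilon> / (real s / d)"
proof -
  have Ival_eq: "Ival V E \<epsilon> s w j =
      {real (deg V E w) * (1 - 4 * (real s / d) * real j - 34 * ln n / d powr \<epsilon>) ..
       real (deg V E w) * (1 - 4 * (real s / d) * real j + 3 * (real s / d))}" for w j
    unfolding Ival_def Let_def d_def n_def by (simp add: mult.commute mult.left_commute)
  have "real (deg V E u) > 0"
    using mindeg_le_deg[OF assms(3,4), of E] assms(6) by simp
  moreover have "n \<ge> 1"
    using assms(3,4) unfolding n_def by (auto simp: Suc_le_eq card_gt_0_iff)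
  ultimately show ?thesis
    unfolding meeting_parts_def Ival_eq using assms unfolding d_def
    by (intro card_meeting_shifted_intervals_le) auto
qed

section \<open>Concentration of \<open>|L(v)|\<close>\<close>

lemma Lset_subset_meeting_parts:
  assumes "mindeg V E > 0" "s > 0" "k > 0" "v \<in> Spart V E s k X i"
  shows "Lset V E \<epsilon> s k X v \<subseteq> {u \<in> V - {v}. X u \<in>
    (\<Union>j \<in> meeting_parts V E \<epsilon> s k v i u. part_range V E s k j)}"
proof
  fix u assume "u \<in> Lset V E \<epsilon> s k X v"
  then obtain i' j where "u \<noteq> v" "j \<in> {1..k}" "v \<in> Spart V E s k X i'" "u \<in> Spart V E s k X j"
    and "Ival V E \<epsilon> s v i' \<inter> Ival V E \<epsilon> s u j \<noteq> {}"
    unfolding Lset_iff by blast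
  moreover have "i' = i"
    using Spart_unique[OF assms(1-3)] \<open>v \<in> Spart V E s k X i'\<close> assms(4) .
  ultimately show "u \<in> {u \<in> V - {v}. X u \<in>
    (\<Union>j \<in> meeting_parts V E \<epsilon> s k v i u. part_range V E s k j)}"
    by (auto simp: Spart_iff meeting_parts_def)
qed

lemma prob_part_and_large_Lset_le:
  fixes V :: "nat set" and s k :: nat
  assumes V: "finite V" "v \<in> V" "card V \<ge> 2"
    and pos: "mindeg V E > 0" "s > 0" "k > 0"
    and overlap: "\<And>u. u \<in> V - {v} \<Longrightarrow>
      real (card (meeting_parts V E \<epsilon> s k v i u)) \<le> c"
    and "t \<ge> 0"
    and threshold: "(real (card V) - 1) * (c * (real s / (real (mindeg V E) * real k))) + t \<le> b"
  shows "measure (labels V)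
      {X \<in> space (labels V). v \<in> Spart V E s k X i \<and> b < real (card (Lset V E \<epsilon> s k X v))}
    \<le> exp (- 2 * t\<^sup>2 / (real (card V) - 1))"
proof -
  interpret prob_space "labels V" by (rule prob_space_labels)
  define W where "W = V - {v}"
  define w where "w = real s / (real (mindeg V E) * real k)"
  define T where "T u = (\<Union>j \<in> meeting_parts V E \<epsilon> s k v i u. part_range V E s k j)" for u
  have "w \<ge> 0"
    unfolding w_def by simp
  have card_W: "real (card W) = real (card V) - 1"
    unfolding W_def using V by (simp add: of_nat_diff)
  have "card W \<ge> 1"
    using card_W V(3) by linarith
  then have "W \<noteq> {}"
    by auto
  then have W: "finite W" "W \<noteq> {}" "W \<subseteq> V"
    using V unfolding W_def by auto
  have T_borel: "T u \<in> sets borel" for u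
    unfolding T_def meeting_parts_def by (intro sets.finite_UN) auto
  have measure_T: "measure uniform01 (T u) \<le> c * w" if "u \<in> W" for u
  proof -
    interpret uniform01: prob_space uniform01 by (rule prob_space_uniform01)
    have "measure uniform01 (T u) \<le>
        (\<Sum>j \<in> meeting_parts V E \<epsilon> s k v i u. measure uniform01 (part_range V E s k j))"
      unfolding T_def meeting_parts_def by (intro uniform01.finite_measure_subadditive_finite) auto
    also have "\<dots> \<le> (\<Sum>j \<in> meeting_parts V E \<epsilon> s k v i u. w)"
      unfolding w_def by (intro sum_mono measure_part_range_le[OF pos(1)]) (auto simp: meeting_parts_def)
    also have "\<dots> = real (card (meeting_parts V E \<epsilon> s k v i u)) * w"
      by simp
    also have "\<dots> \<le> c * w"
      using overlap[of u] that \<open>w \<ge> 0\<close> unfolding W_def by (intro mult_right_mono) auto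
    finally show ?thesis .
  qed
  have "{X \<in> space (labels V). v \<in> Spart V E s k X i \<and> b < real (card (Lset V E \<epsilon> s k X v))}
      \<subseteq> {X \<in> space (labels V). real (card W) * (c * w) + t \<le> (\<Sum>u\<in>W. indicator (T u) (X u))}"
  proof safe
    fix X assume "X \<in> space (labels V)" "v \<in> Spart V E s k X i"
      and large: "b < real (card (Lset V E \<epsilon> s k X v))"
    have "card (Lset V E \<epsilon> s k X v) \<le> card {u \<in> W. X u \<in> T u}"
      using Lset_subset_meeting_parts[OF pos \<open>v \<in> Spart V E s k X i\<close>] W(1)
      unfolding W_def T_def by (intro card_mono) auto
    also have "real (card {u \<in> W. X u \<in> T u}) = (\<Sum>u\<in>W. indicator (T u) (X u))"
      using W(1) by (simp add: sum.If_cases indicator_def Int_def)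
    finally show "real (card W) * (c * w) + t \<le> (\<Sum>u\<in>W. indicator (T u) (X u))"
      using large threshold unfolding card_W w_def by linarith
  qed
  moreover have "{X \<in> space (labels V). real (card W) * (c * w) + t \<le> (\<Sum>u\<in>W. indicator (T u) (X u))} \<in> events"
    using T_borel by measurable
  ultimately have "measure (labels V)
      {X \<in> space (labels V). v \<in> Spart V E s k X i \<and> b < real (card (Lset V E \<epsilon> s k X v))}
    \<le> measure (labels V) {X \<in> space (labels V). real (card W) * (c * w) + t \<le> (\<Sum>u\<in>W. indicator (T u) (X u))}"
    by (rule finite_measure_mono)
  also have "\<dots> \<le> exp (- 2 * t\<^sup>2 / real (card W))"
    using W T_borel measure_T \<open>t \<ge> 0\<close> by (rule labels_indicator_sum_tail)
  finally show ?thesis unfolding card_W .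
qed

lemma prob_small_Lsets_ge:
  assumes "finite V"
    and bad: "\<And>v i. v \<in> V \<Longrightarrow> i \<in> {1..k} \<Longrightarrow> measure (labels V)
      {X \<in> space (labels V). v \<in> Spart V E s k X i \<and> b v < real (card (Lset V E \<epsilon> s k X v))} \<le> q"
  shows "measure (labels V)
      {X \<in> space (labels V). \<forall>v \<in> Sset V E s k X. real (card (Lset V E \<epsilon> s k X v)) \<le> b v}
    \<ge> 1 - real (card V) * real k * q"
proof -
  interpret prob_space "labels V" by (rule prob_space_labels)
  define Bad where "Bad v i = {X \<in> space (labels V).
    v \<in> Spart V E s k X i \<and> b v < real (card (Lset V E \<epsilon> s k X v))}" for v i
  define Good where "Good = {X \<in> space (labels V).
    \<forall>v \<in> Sset V E s k X. real (card (Lset V E \<epsilon> s k X v)) \<le> b v}"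
  have Bad_events: "Bad v i \<in> events" for v i
    unfolding Bad_def using \<open>finite V\<close> by measurable
  have Good_eq: "Good = {X \<in> space (labels V). \<forall>v \<in> V. \<forall>i \<in> {1..k}.
      v \<in> Spart V E s k X i \<longrightarrow> real (card (Lset V E \<epsilon> s k X v)) \<le> b v}"
    unfolding Good_def ball_Sset_iff ..
  have "Good \<in> events"
    unfolding Good_eq using \<open>finite V\<close> by measurable
  have "space (labels V) - Good \<subseteq> (\<Union>v\<in>V. \<Union>i\<in>{1..k}. Bad v i)"
  proof
    fix X assume X: "X \<in> space (labels V) - Good"
    then obtain v i where "v \<in> V" "i \<in> {1..k}" "v \<in> Spart V E s k X i"
      and "\<not> real (card (Lset V E \<epsilon> s k X v)) \<le> b v"
      unfolding Good_eq by auto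
    then have "X \<in> Bad v i"
      using X unfolding Bad_def by (simp add: not_le)
    then show "X \<in> (\<Union>v\<in>V. \<Union>i\<in>{1..k}. Bad v i)"
      using \<open>v \<in> V\<close> \<open>i \<in> {1..k}\<close> by blast
  qed
  then have "prob (space (labels V) - Good) \<le> prob (\<Union>v\<in>V. \<Union>i\<in>{1..k}. Bad v i)"
    using Bad_events \<open>finite V\<close> by (intro finite_measure_mono) auto
  also have "\<dots> \<le> (\<Sum>v\<in>V. \<Sum>i\<in>{1..k}. prob (Bad v i))"
    using Bad_events \<open>finite V\<close>
    by (intro order_trans[OF finite_measure_subadditive_finite] sum_mono finite_measure_subadditive_finite) auto
  also have "\<dots> \<le> (\<Sum>v\<in>V. \<Sum>i\<in>{1..k}. q)"
    using bad unfolding Bad_def by (intro sum_mono) auto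
  finally show ?thesis
    using prob_compl[OF \<open>Good \<in> events\<close>] unfolding Good_def by simp
qed

section \<open>The parameter regime\<close>

text \<open>
  The explicit \<open>n\<^sub>0 = exp (exp 16)\<close> is where \<open>ln ln n \<ge> 16\<close>; since \<open>4 s k / d = 4 / ln ln n\<close>,
  this makes the intervals of all parts fit into \<open>[deg(v)/2, 3 deg(v)/2]\<close>.
\<close>

locale parameter_regime =
  fixes \<epsilon> n d s k :: real
  assumes eps_pos: "0 < \<epsilon>" and eps_less: "\<epsilon> < 1/4"
    and n_large: "exp (exp 16) \<le> n" and d_le_n: "d \<le> n"
    and d_large: "ln n powr (2/\<epsilon>) * ln (ln n) powr (1/\<epsilon>) \<le> d"
    and s_eq: "s = d powr (1/2 + \<epsilon>)" and k_eq: "k = d powr (1/2 - \<epsilon>) / ln (ln n)"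
begin

lemma ln_n_ge: "exp 16 \<le> ln n"
  using n_large by (metis exp_gt_zero less_le_trans ln_exp ln_le_cancel_iff)

lemma ln_ln_n_ge: "16 \<le> ln (ln n)"
  using ln_n_ge by (metis exp_gt_zero less_le_trans ln_exp ln_le_cancel_iff)

lemma ln_n_ge_17: "17 \<le> ln n"
  using ln_n_ge exp_ge_add_one_self[of 16] by simp

lemma n_ge_2: "2 \<le> n"
proof -
  have "exp 1 \<le> exp (exp (16 :: real))"
    using exp_ge_add_one_self[of 16] by simp
  moreover have "2 \<le> exp (1 :: real)"
    using exp_ge_add_one_self[of 1] by simp
  ultimately show ?thesis
    using n_large by linarith
qed

lemma d_powr_eps_ge: "(ln n)\<^sup>2 * ln (ln n) \<le> d powr \<epsilon>"
proof -
  have "(ln n powr (2/\<epsilon>) * ln (ln n) powr (1/\<epsilon>)) powr \<epsilon> \<le> d powr \<epsilon>"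
    using d_large eps_pos by (intro powr_mono2) auto
  moreover have "(ln n powr (2/\<epsilon>) * ln (ln n) powr (1/\<epsilon>)) powr \<epsilon> = (ln n)\<^sup>2 * ln (ln n)"
    using eps_pos ln_n_ge_17 ln_ln_n_ge by (simp add: powr_mult powr_powr powr_numeral)
  ultimately show ?thesis by simp
qed

lemma log_factor_ge: "17 * 16 \<le> (ln n)\<^sup>2 * ln (ln n)"
proof -
  have "17 \<le> (ln n)\<^sup>2"
    using ln_n_ge_17 mult_right_mono[of 1 "ln n" "ln n"] unfolding power2_eq_square by linarith
  then show ?thesis
    using ln_ln_n_ge by (intro mult_mono) auto
qed

lemma d_ge_1: "1 \<le> d"
proof -
  have "1 \<le> ln n powr (2/\<epsilon>)" "1 \<le> ln (ln n) powr (1/\<epsilon>)"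
    using ln_n_ge_17 ln_ln_n_ge eps_pos by (simp_all add: ge_one_powr_ge_zero)
  then have "1 \<le> ln n powr (2/\<epsilon>) * ln (ln n) powr (1/\<epsilon>)"
    by (metis mult_mono' mult_1 zero_le_one)
  then show ?thesis
    using d_large by linarith
qed

lemma s_pos: "0 < s" and k_pos: "0 < k"
  using d_ge_1 ln_ln_n_ge unfolding s_eq k_eq by auto

lemma s_over_d: "s / d = d powr (\<epsilon> - 1/2)"
proof -
  have "d powr (\<epsilon> - 1/2) = d powr (1/2 + \<epsilon>) / d powr 1"
    using powr_diff[of d "1/2 + \<epsilon>" 1] by simp
  then show ?thesis
    using d_ge_1 unfolding s_eq by simp
qed

lemma s_over_d_le: "s / d \<le> 1 / d powr \<epsilon>"
proof -
  have "d powr (\<epsilon> - 1/2) \<le> d powr (- \<epsilon>)"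
    using d_ge_1 eps_less by (intro powr_mono) auto
  then show ?thesis
    by (simp add: s_over_d powr_minus_divide)
qed

lemma slack_le: "34 * ln n / d powr \<epsilon> \<le> 1/4"
proof -
  have "34 * ln n / d powr \<epsilon> \<le> 34 * ln n / ((ln n)\<^sup>2 * ln (ln n))"
    using d_powr_eps_ge log_factor_ge ln_n_ge_17 d_ge_1 by (intro divide_left_mono) auto
  also have "\<dots> = 34 / (ln n * ln (ln n))"
    using ln_n_ge_17 by (simp add: power2_eq_square)
  also have "\<dots> \<le> 1/4"
  proof -
    have "17 * 16 \<le> ln n * ln (ln n)"
      using ln_n_ge_17 ln_ln_n_ge by (intro mult_mono) auto
    then show ?thesis by (simp add: field_simps)
  qed
  finally show ?thesis .
qed

lemma parts_fit: "4 * (s / d) * k + 34 * ln n / d powr \<epsilon> \<le> 1/2"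
proof -
  have "4 * (s / d) * k = 4 / ln (ln n)"
    using d_ge_1 ln_ln_n_ge unfolding s_over_d k_eq by (simp add: powr_add[symmetric])
  also have "\<dots> \<le> 1/4"
    using ln_ln_n_ge by simp
  finally show ?thesis
    using slack_le by linarith
qed

lemma three_steps_le: "3 * (s / d) \<le> 1/2"
proof -
  have "1 / d powr \<epsilon> \<le> 1 / ((ln n)\<^sup>2 * ln (ln n))"
    using d_powr_eps_ge log_factor_ge d_ge_1 by (intro divide_left_mono) auto
  also have "\<dots> \<le> 1/6"
    using log_factor_ge by (simp add: field_simps)
  finally show ?thesis
    using s_over_d_le by linarith
qed

lemma k_d_powr_eps_sq_le: "(k * d powr \<epsilon>)\<^sup>2 \<le> n"
proof -
  have "k * d powr \<epsilon> = d powr (1/2) / ln (ln n)"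
    using d_ge_1 unfolding k_eq by (simp add: powr_add[symmetric])
  then have "(k * d powr \<epsilon>)\<^sup>2 = d / (ln (ln n))\<^sup>2"
    using d_ge_1 by (simp add: power_divide power2_eq_square powr_add[symmetric])
  also have "\<dots> \<le> d"
    using d_ge_1 ln_ln_n_ge by (simp add: field_simps)
  finally show ?thesis
    using d_le_n by linarith
qed

lemma k_le_n: "k \<le> n"
proof -
  have "k \<le> d powr (1/2 - \<epsilon>)"
    using d_ge_1 ln_ln_n_ge unfolding k_eq by (simp add: divide_le_eq)
  also have "\<dots> \<le> d powr 1"
    using d_ge_1 eps_pos by (intro powr_mono) auto
  finally show ?thesis
    using d_ge_1 d_le_n by simp
qed

definition scale :: real where
  "scale = n * ln n / (k * d powr \<epsilon>)"

lemma scale_pos: "0 < scale"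
  unfolding scale_def using n_ge_2 ln_n_ge_17 k_pos d_ge_1 by simp

lemma threshold_le:
  "(n - 1) * ((4 + 34 * ln n / d powr \<epsilon> / (s / d)) * (s / (d * k))) + 4 * scale \<le> 42 * scale"
proof -
  have "(4 + 34 * ln n / d powr \<epsilon> / (s / d)) * (s / (d * k)) = (4 * (s / d) + 34 * ln n / d powr \<epsilon>) / k"
    using s_pos d_ge_1 k_pos by (simp add: field_simps)
  also have "\<dots> \<le> (4 * (ln n / d powr \<epsilon>) + 34 * ln n / d powr \<epsilon>) / k"
  proof -
    have "1 / d powr \<epsilon> \<le> ln n / d powr \<epsilon>"
      using ln_n_ge_17 by (intro divide_right_mono) auto
    then show ?thesis
      using s_over_d_le k_pos by (intro divide_right_mono) auto
  qed
  also have "\<dots> = 38 * scale / n"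
    using n_ge_2 unfolding scale_def by (simp add: field_simps)
  finally have "(n - 1) * ((4 + 34 * ln n / d powr \<epsilon> / (s / d)) * (s / (d * k)))
      \<le> (n - 1) * (38 * scale / n)"
    using n_ge_2 by (intro mult_left_mono) auto
  also have "\<dots> \<le> 38 * scale"
    using n_ge_2 scale_pos by (simp add: field_simps)
  finally show ?thesis by linarith
qed

lemma tail_le: "exp (- 2 * (4 * scale)\<^sup>2 / (n - 1)) \<le> 1 / n ^ 4"
proof -
  have "0 < (k * d powr \<epsilon>)\<^sup>2"
    using k_pos d_ge_1 by simp
  then have "(ln n)\<^sup>2 \<le> n * (ln n)\<^sup>2 / (k * d powr \<epsilon>)\<^sup>2"
    using mult_left_mono[OF k_d_powr_eps_sq_le, of "(ln n)\<^sup>2"] by (simp add: field_simps)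
  also have "\<dots> = scale\<^sup>2 / n"
    using n_ge_2 unfolding scale_def by (simp add: power2_eq_square field_simps)
  also have "\<dots> \<le> scale\<^sup>2 / (n - 1)"
    using n_ge_2 by (intro divide_left_mono) auto
  finally have "32 * (ln n)\<^sup>2 \<le> 2 * (4 * scale)\<^sup>2 / (n - 1)"
    by (simp add: power2_eq_square)
  moreover have "4 * ln n \<le> 32 * (ln n)\<^sup>2"
    using ln_n_ge_17 mult_right_mono[of 1 "ln n" "ln n"] unfolding power2_eq_square by linarith
  ultimately have "exp (- 2 * (4 * scale)\<^sup>2 / (n - 1)) \<le> exp (- (4 * ln n))"
    by simp
  also have "exp (- (4 * ln n)) = 1 / n ^ 4"
    using n_ge_2 by (simp add: exp_minus exp_of_nat_mult[of 4, simplified] inverse_eq_divide)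
  finally show ?thesis .
qed

end

lemma mindeg_le_card:
  assumes "finite V" "V \<noteq> {}"
  shows "mindeg V E \<le> card V"
proof -
  obtain v where "v \<in> V"
    using assms(2) by blast
  then show ?thesis
    using le_trans[OF mindeg_le_deg deg_le_card] assms(1) by blast
qed

lemma parameter_regime_graph:
  fixes V :: "nat set" and E :: "nat \<Rightarrow> nat \<Rightarrow> bool" and s k :: nat
  assumes "0 < \<epsilon>" "\<epsilon> < 1/4" "finite V" "nat \<lceil>exp (exp (16 :: real))\<rceil> \<le> card V"
    and "ln (real (card V)) powr (2/\<epsilon>) * ln (ln (real (card V))) powr (1/\<epsilon>) \<le> real (mindeg V E)"
    and "real s = real (mindeg V E) powr (1/2 + \<epsilon>)"
    and "real k = real (mindeg V E) powr (1/2 - \<epsilon>) / ln (ln (real (card V)))"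
  shows "parameter_regime \<epsilon> (real (card V)) (real (mindeg V E)) (real s) (real k)"
proof -
  have "exp (exp 16) \<le> real (card V)"
    using assms(4) by linarith
  moreover from this have "V \<noteq> {}"
    using exp_gt_zero[of "exp 16"] by (intro notI) simp
  ultimately show ?thesis
    using assms mindeg_le_card[of V E] by unfold_locales auto
qed

context
  fixes V :: "nat set" and E :: "nat \<Rightarrow> nat \<Rightarrow> bool" and s k :: nat and \<epsilon> :: real
  assumes finite_V: "finite V"
    and regime: "parameter_regime \<epsilon> (real (card V)) (real (mindeg V E)) (real s) (real k)"
begin

interpretation parameter_regime \<epsilon> "real (card V)" "real (mindeg V E)" "real s" "real k"
  by (fact regime)

lemma prob_part_and_large_Lset_in_regime:
  fixes v i :: nat
  defines "b \<equiv> 42 * real (card V) * real (deg V E v) * ln (real (card V))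
    / (real k * real (mindeg V E) powr (1 + \<epsilon>))"
  assumes "v \<in> V" "i \<in> {1..k}"
  shows "measure (labels V)
      {X \<in> space (labels V). v \<in> Spart V E s k X i \<and> b < real (card (Lset V E \<epsilon> s k X v))}
    \<le> 1 / real (card V) ^ 4"
proof -
  let ?n = "real (card V)" and ?d = "real (mindeg V E)"
  have pos: "mindeg V E > 0" "s > 0" "k > 0" and "card V \<ge> 2"
    using d_ge_1 s_pos k_pos n_ge_2 by auto
  have "?d \<le> real (deg V E v)"
    using mindeg_le_deg[OF finite_V \<open>v \<in> V\<close>] by simp
  then have "1 \<le> real (deg V E v) / ?d"
    using d_ge_1 by simp
  moreover have "b = 42 * scale * (real (deg V E v) / ?d)"
    using d_ge_1 unfolding b_def scale_def by (simp add: powr_add field_simps)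
  ultimately have "42 * scale \<le> b"
    using scale_pos mult_left_mono[of 1 "real (deg V E v) / ?d" "42 * scale"] by simp
  then have threshold: "(?n - 1) * ((4 + 34 * ln ?n / ?d powr \<epsilon> / (real s / ?d)) * (real s / (?d * real k)))
      + 4 * scale \<le> b"
    using threshold_le by linarith
  have overlap: "real (card (meeting_parts V E \<epsilon> s k v i u))
      \<le> 4 + 34 * ln ?n / ?d powr \<epsilon> / (real s / ?d)" if "u \<in> V - {v}" for u
    using card_meeting_parts_le[OF finite_V _ _ pos(1,2) parts_fit three_steps_le] that
      \<open>i \<in> {1..k}\<close> by simp
  have "measure (labels V)
      {X \<in> space (labels V). v \<in> Spart V E s k X i \<and> b < real (card (Lset V E \<epsilon> s k X v))}
    \<le> exp (- 2 * (4 * scale)\<^sup>2 / (?n - 1))"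
    using scale_pos
    by (intro prob_part_and_large_Lset_le[OF finite_V \<open>v \<in> V\<close> \<open>card V \<ge> 2\<close> pos overlap _ threshold])
      simp_all
  then show ?thesis
    using tail_le by linarith
qed

lemma prob_small_Lsets_in_regime:
  "measure (labels V)
      {X \<in> space (labels V). \<forall>v \<in> Sset V E s k X.
         real (card (Lset V E \<epsilon> s k X v))
           \<le> 42 * real (card V) * real (deg V E v) * ln (real (card V))
              / (real k * real (mindeg V E) powr (1 + \<epsilon>))}
    \<ge> 1 - 1 / real (card V) ^ 2"
proof -
  let ?n = "real (card V)"
  have "measure (labels V)
      {X \<in> space (labels V). \<forall>v \<in> Sset V E s k X.
         real (card (Lset V E \<epsilon> s k X v))
           \<le> 42 * real (card V) * real (deg V E v) * ln (real (card V))
              / (real k * real (mindeg V E) powr (1 + \<epsilon>))}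
    \<ge> 1 - ?n * real k * (1 / ?n ^ 4)"
    using finite_V prob_part_and_large_Lset_in_regime by (rule prob_small_Lsets_ge)
  moreover have "?n * real k * (1 / ?n ^ 4) \<le> 1 / ?n ^ 2"
    using k_le_n n_ge_2 by (simp add: field_simps power4_eq_xxxx power2_eq_square mult_left_mono)
  ultimately show ?thesis
    by linarith
qed

end

theorem claim5p3:
  fixes \<epsilon> :: real
  assumes "0 < \<epsilon>" and "\<epsilon> < 1/4"
  shows "\<exists>n0::nat. \<forall>(V::nat set) (E::nat \<Rightarrow> nat \<Rightarrow> bool) (s::nat) (k::nat).
    finite V \<and> card V \<ge> n0 \<and>
    (\<forall>u v. E u v \<longrightarrow> E v u) \<and> (\<forall>v. \<not> E v v) \<and>
    real (mindeg V E) \<ge> ln (real (card V)) powr (2/\<epsilon>) * ln (ln (real (card V))) powr (1/\<epsilon>) \<and>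
    real s = real (mindeg V E) powr (1/2 + \<epsilon>) \<and>
    real k = real (mindeg V E) powr (1/2 - \<epsilon>) / ln (ln (real (card V)))
    \<longrightarrow>
    measure (labels V)
      {X \<in> space (labels V). \<forall>v \<in> Sset V E s k X.
         real (card (Lset V E \<epsilon> s k X v))
           \<le> 42 * real (card V) * real (deg V E v) * ln (real (card V))
              / (real k * real (mindeg V E) powr (1 + \<epsilon>))}
    \<ge> 1 - 1 / real (card V) ^ 2"
  using assms
  by (intro exI[of _ "nat \<lceil>exp (exp (16 :: real))\<rceil>"] allI impI prob_small_Lsets_in_regime
      parameter_regime_graph) auto

end
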